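(* Consider an execution of algorithm $\mathcal{A}_2$ (described in the context) in a synchronous message-passing system of $n$ processes with authentication in which up to $t<n$ processes are Byzantine. Then at most $\lfloor \frac{n}{n-t} \rfloor$ distinct values are decided by correct processes.
   Context: Model: synchronous rounds, reliable channels between all pairs, unforgeable signatures, up to $t$ Byzantine processes; the others are correct. The decision $\bot$ counts as a decided value. Terminating Reliable Broadcast (TRB) with sender $p$: $p$ broadcasts a value $m$ and every process delivers either a value or a special value $SF$, satisfying: (Termination) every correct process delivers some value; (Validity) if the sender is correct and broadcasts $m$, every correct process delivers $m$; (Integrity) a process delivers at most once, and if it delivers $m\ne SF$ then $m$ was broadcast by the sender; (Agreement) if a correct process delivers $m$, all correct processes deliver $m$. TRB is implemented in this model in $t+1$ rounds by the classical authenticated signature-chain algorithm. Algorithm $\mathcal{A}_2$, code of $p_i$ with input $v_i$: Phase 1: $n$ instances of TRB are run, instance $q$ having $p_q$ as sender; $p_i$ broadcasts $v_i$ in its own instance and sets $L_i[p_i] := v_i$; for each process $q$, $p_i$ sets $L_i[q]$ to the value (possibly $SF$) delivered in the instance with sender $q$. Phase 2: if at least $n-t$ entries of $L_i$ equal $v_i$, decide $v_i$; else, if some value $v$ appears at least $n-t$ times in $L_i$, decide such a $v$; else decide $\bot$. *)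

theory Defs
  imports Main
begin

text \<open>Processes are 0,...,n-1. The value delivered by a TRB instance is either a
  proper value or the special value SF.\<close>
datatype 'v deliv = Val 'v | SF

datatype 'v decision = Dec 'v | Bot

definition occ :: "nat \<Rightarrow> (nat \<Rightarrow> 'v deliv) \<Rightarrow> 'v \<Rightarrow> nat" where
  "occ n Li w = card {q. q < n \<and> Li q = Val w}"

text \<open>Outcome of Phase 1 of A2: L i q is the value process i delivers in the TRB
  instance with sender q (Termination: every correct process delivers, i.e. L is total);
  the own entry of a correct process is its input; Validity for correct senders;
  Agreement among correct processes. F is the set of Byzantine processes, v the inputs.\<close>
definition A2_phase1 :: "nat \<Rightarrow> nat set \<Rightarrow> (nat \<Rightarrow> 'v) \<Rightarrow> (nat \<Rightarrow> nat \<Rightarrow> 'v deliv) \<Rightarrow> bool" where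
  "A2_phase1 n F v L \<longleftrightarrow>
     (\<forall>i<n. i \<notin> F \<longrightarrow> L i i = Val (v i)) \<and>
     (\<forall>i<n. \<forall>q<n. i \<notin> F \<longrightarrow> q \<notin> F \<longrightarrow> L i q = Val (v q)) \<and>
     (\<forall>i<n. \<forall>j<n. \<forall>q<n. i \<notin> F \<longrightarrow> j \<notin> F \<longrightarrow> L i q = L j q)"

definition A2_phase2 :: "nat \<Rightarrow> nat \<Rightarrow> 'v \<Rightarrow> (nat \<Rightarrow> 'v deliv) \<Rightarrow> 'v decision \<Rightarrow> bool" where
  "A2_phase2 n t vi Li d \<longleftrightarrow>
     (if occ n Li vi \<ge> n - t then d = Dec vi
      else if (\<exists>w. occ n Li w \<ge> n - t) then (\<exists>w. d = Dec w \<and> occ n Li w \<ge> n - t)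
      else d = Bot)"

end

theory Submission
  imports Defs
begin

text \<open>All correct processes end Phase 1 with the same vector, so each of them decides either
  one of the values occurring at least n - t times in that common vector or, if there is no
  such value, bottom. The occurrence sets of distinct values are disjoint subsets of the n
  processes, so at most n div (n - t) values can occur n - t times; as this bound is
  positive, it also covers the case where all correct processes decide bottom.\<close>

definition frequent_values :: "nat \<Rightarrow> nat \<Rightarrow> (nat \<Rightarrow> 'v deliv) \<Rightarrow> 'v set" where
  "frequent_values n k Li = {w. k \<le> occ n Li w}"

definition A2_decisions :: "nat \<Rightarrow> nat \<Rightarrow> (nat \<Rightarrow> 'v deliv) \<Rightarrow> 'v decision set" where
  "A2_decisions n t Li =
     (if frequent_values n (n - t) Li = {} then {Bot} else Dec ` frequent_values n (n - t) Li)"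

lemma occ_cong:
  assumes "\<And>q. q < n \<Longrightarrow> Li q = Li' q"
  shows "occ n Li w = occ n Li' w"
  unfolding occ_def using assms by metis

lemma frequent_values_subset_image:
  assumes "0 < k"
  shows "frequent_values n k Li \<subseteq> (\<lambda>q. case Li q of Val w \<Rightarrow> w) ` {..<n}"
proof
  fix w assume "w \<in> frequent_values n k Li"
  then have "0 < card {q. q < n \<and> Li q = Val w}"
    using assms by (simp add: frequent_values_def occ_def)
  then obtain q where "q < n" "Li q = Val w"
    by (auto simp: card_gt_0_iff)
  then show "w \<in> (\<lambda>q. case Li q of Val w \<Rightarrow> w) ` {..<n}"
    by force
qed

lemma finite_frequent_values:
  assumes "0 < k"
  shows "finite (frequent_values n k Li)"
  using frequent_values_subset_image[OF assms] by (rule finite_subset) simp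

lemma card_frequent_values_le:
  assumes "0 < k"
  shows "card (frequent_values n k Li) \<le> n div k"
proof -
  let ?W = "frequent_values n k Li"
  let ?S = "\<lambda>w. {q. q < n \<and> Li q = Val w}"
  have "card ?W * k = (\<Sum>w\<in>?W. k)"
    by simp
  also have "\<dots> \<le> (\<Sum>w\<in>?W. card (?S w))"
    by (rule sum_mono) (simp add: frequent_values_def occ_def)
  also have "\<dots> = card (\<Union>w\<in>?W. ?S w)"
    using finite_frequent_values[OF assms] by (intro card_UN_disjoint[symmetric]) auto
  also have "\<dots> \<le> card {..<n}"
    by (rule card_mono) auto
  finally have "card ?W * k \<le> n"
    by simp
  then show ?thesis
    using assms by (simp add: less_eq_div_iff_mult_less_eq)
qed

lemma card_A2_decisions_le:
  assumes "t < n"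
  shows "card (A2_decisions n t Li) \<le> n div (n - t)"
proof -
  have "0 < n div (n - t)"
    using assms by (simp add: div_greater_zero_iff)
  moreover have "card (Dec ` frequent_values n (n - t) Li) \<le> card (frequent_values n (n - t) Li)"
    by (rule card_image_le) (simp add: assms finite_frequent_values)
  moreover have "card (frequent_values n (n - t) Li) \<le> n div (n - t)"
    using assms by (simp add: card_frequent_values_le)
  ultimately show ?thesis
    by (simp add: A2_decisions_def)
qed

lemma finite_A2_decisions:
  assumes "t < n"
  shows "finite (A2_decisions n t Li)"
  using assms by (simp add: A2_decisions_def finite_frequent_values)

lemma A2_phase2_in_A2_decisions:
  assumes "A2_phase2 n t vi Li d"
  shows "d \<in> A2_decisions n t Li"
proof (cases "frequent_values n (n - t) Li = {}")
  case True
  then show ?thesis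
    using assms by (simp add: A2_phase2_def A2_decisions_def frequent_values_def)
next
  case False
  then show ?thesis
    using assms by (auto simp: A2_phase2_def A2_decisions_def frequent_values_def split: if_splits)
qed

lemma A2_decisions_eq_of_correct:
  assumes "A2_phase1 n F v L" "i < n" "i \<notin> F" "j < n" "j \<notin> F"
  shows "A2_decisions n t (L i) = A2_decisions n t (L j)"
proof -
  have "L i q = L j q" if "q < n" for q
    using assms that unfolding A2_phase1_def by blast
  then have "occ n (L i) = occ n (L j)"
    by (intro ext occ_cong)
  then show ?thesis
    by (simp add: A2_decisions_def frequent_values_def)
qed

theorem lemma10:
  fixes n t :: nat and F :: "nat set" and v :: "nat \<Rightarrow> 'v"
    and L :: "nat \<Rightarrow> nat \<Rightarrow> 'v deliv" and dec :: "nat \<Rightarrow> 'v decision"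
  assumes "t < n"
    and "F \<subseteq> {..<n}" and "card F \<le> t"
    and "A2_phase1 n F v L"
    and "\<forall>i<n. i \<notin> F \<longrightarrow> A2_phase2 n t (v i) (L i) (dec i)"
  shows "card (dec ` {i. i < n \<and> i \<notin> F}) \<le> n div (n - t)"
proof (cases "{i. i < n \<and> i \<notin> F} = {}")
  case True
  then show ?thesis
    unfolding True by simp
next
  case False
  then obtain i0 where i0: "i0 < n" "i0 \<notin> F"
    by auto
  have "dec i \<in> A2_decisions n t (L i0)" if "i < n" "i \<notin> F" for i
  proof -
    have "dec i \<in> A2_decisions n t (L i)"
      using assms(5) that by (blast intro: A2_phase2_in_A2_decisions)
    then show ?thesis
      using A2_decisions_eq_of_correct[OF assms(4) that i0] by simp
  qed
  then have "dec ` {i. i < n \<and> i \<notin> F} \<subseteq> A2_decisions n t (L i0)"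
    by blast
  then have "card (dec ` {i. i < n \<and> i \<notin> F}) \<le> card (A2_decisions n t (L i0))"
    using assms(1) by (intro card_mono finite_A2_decisions)
  also have "\<dots> \<le> n div (n - t)"
    using assms(1) by (rule card_A2_decisions_le)
  finally show ?thesis .
qed

end
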